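(* Any decomposable sum-product network (SPN) can be represented by a stochastic context-free And-Or grammar whose size is linear in the size of the SPN, in the sense that for every assignment to the random variables, the marginal probability computed by the And-Or grammar equals the probability computed by the SPN.
   Context: A sum-product network over random variables $x_1,\dots,x_d$ is a rooted directed acyclic graph whose leaves are indicators $x_i$ or $\bar x_i$ and whose non-leaf nodes are sum nodes (computing a weighted sum of their children) or product nodes (computing the product of their children); its value is that of its root. The scope of a node is the set of variables appearing in its descendant leaves. For validity, children of a sum node have identical scopes and children of a product node contain no conflicting leaves ($x_i$ in one, $\bar x_i$ in another). An SPN is decomposable if the children of every product node have disjoint scopes. The probability computed by the SPN refers to its (normalized) distribution. A stochastic context-free And-Or grammar (AOG) is a tuple $\langle \Sigma, N, S, \theta, R\rangle$: terminal nodes $\Sigma$; nonterminal nodes $N$ partitioned into And-nodes and Or-nodes; start symbol $S$; $\theta$ maps each instance of a node $x$ to a parameter $\theta_x$; $R$ is partitioned into And-rules and Or-rules. An And-rule $\langle A\to\{x_1,\dots,x_n\}, t, f\rangle$ ($n\ge2$) has a parameter relation $t(\theta_{x_1},\dots,\theta_{x_n})$ and parameter function $\theta_A=f(\theta_{x_1},\dots,\theta_{x_n})$; each And-node heads exactly one And-rule. An Or-rule $\langle O\to x, p\rangle$ has conditional probability $p$ and requires $\theta_O=\theta_x$. A parse of a data sample (a set of terminal instances) is a tree rooted at an instance of $S$ with leaves exactly the sample, And-node instances expanded by their And-rule subject to the parameter relation/function, Or-node instances by exactly one Or-rule with equal parameter; its probability is the product of used Or-rule probabilities, and the marginal probability of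 a sample is the sum over its parses. *)

theory Defs
  imports "HOL-Analysis.Analysis"
begin

text \<open>Variables are x_0, ..., x_(d-1) (0-based). A leaf Leaf i True is the indicator x_i,
 Leaf i False is the negated indicator (bar x_i).\<close>

datatype spn_node = Leaf nat bool | Sum "(nat \<times> real) list" | Prod "nat list"

record spn =
  spn_nodes :: "nat set"
  spn_root  :: nat
  spn_lbl   :: "nat \<Rightarrow> spn_node"

fun node_children :: "spn_node \<Rightarrow> nat list" where
  "node_children (Leaf i b) = []"
| "node_children (Sum cs) = map fst cs"
| "node_children (Prod cs) = cs"

text \<open>Edge relation, oriented (child, parent).\<close>
definition spn_edges :: "spn \<Rightarrow> (nat \<times> nat) set" where
  "spn_edges S = {(c, n). n \<in> spn_nodes S \<and> c \<in> set (node_children (spn_lbl S n))}"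

definition spn_leaves :: "spn \<Rightarrow> nat \<Rightarrow> (nat \<times> bool) set" where
  "spn_leaves S n = {(i, b). \<exists>m. (m, n) \<in> (spn_edges S)\<^sup>* \<and> spn_lbl S m = Leaf i b}"

definition spn_scope :: "spn \<Rightarrow> nat \<Rightarrow> nat set" where
  "spn_scope S n = fst ` spn_leaves S n"

definition spn_wf :: "spn \<Rightarrow> nat \<Rightarrow> bool" where
  "spn_wf S d \<longleftrightarrow>
     finite (spn_nodes S) \<and> spn_root S \<in> spn_nodes S \<and>
     wf (spn_edges S) \<and>
     (\<forall>n \<in> spn_nodes S.
        set (node_children (spn_lbl S n)) \<subseteq> spn_nodes S \<and>
        (case spn_lbl S n of
           Leaf i b \<Rightarrow> i < d
         | Sum cs \<Rightarrow> cs \<noteq> [] \<and> (\<forall>(c, w) \<in> set cs. 0 \<le> w)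
         | Prod cs \<Rightarrow> cs \<noteq> [])) \<and>
     spn_scope S (spn_root S) = {..<d}"

definition spn_valid :: "spn \<Rightarrow> bool" where
  "spn_valid S \<longleftrightarrow>
     (\<forall>n \<in> spn_nodes S.
        (\<forall>cs. spn_lbl S n = Sum cs \<longrightarrow>
           (\<forall>c \<in> fst ` set cs. \<forall>c' \<in> fst ` set cs. spn_scope S c = spn_scope S c')) \<and>
        (\<forall>cs. spn_lbl S n = Prod cs \<longrightarrow>
           (\<forall>j < length cs. \<forall>k < length cs. j \<noteq> k \<longrightarrow>
              (\<forall>i. \<not> ((i, True) \<in> spn_leaves S (cs ! j) \<and> (i, False) \<in> spn_leaves S (cs ! k))))))"

definition spn_decomposable :: "spn \<Rightarrow> bool" where
  "spn_decomposable S \<longleftrightarrow>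
     (\<forall>n \<in> spn_nodes S. \<forall>cs. spn_lbl S n = Prod cs \<longrightarrow>
        (\<forall>j < length cs. \<forall>k < length cs. j \<noteq> k \<longrightarrow>
           spn_scope S (cs ! j) \<inter> spn_scope S (cs ! k) = {}))"

inductive spn_val :: "spn \<Rightarrow> bool list \<Rightarrow> nat \<Rightarrow> real \<Rightarrow> bool" for S xs where
  leaf: "spn_lbl S n = Leaf i b \<Longrightarrow> spn_val S xs n (if xs ! i = b then 1 else 0)"
| sum: "spn_lbl S n = Sum cs \<Longrightarrow> list_all2 (spn_val S xs) (map fst cs) vs \<Longrightarrow>
        spn_val S xs n (\<Sum>j<length cs. snd (cs ! j) * vs ! j)"
| prod: "spn_lbl S n = Prod cs \<Longrightarrow> list_all2 (spn_val S xs) cs vs \<Longrightarrow>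
        spn_val S xs n (prod_list vs)"

definition spn_value :: "spn \<Rightarrow> bool list \<Rightarrow> nat \<Rightarrow> real" where
  "spn_value S xs n = (THE v. spn_val S xs n v)"

definition spn_prob :: "spn \<Rightarrow> nat \<Rightarrow> bool list \<Rightarrow> real" where
  "spn_prob S d xs = spn_value S xs (spn_root S) /
      (\<Sum>ys \<in> {ys. length ys = d}. spn_value S ys (spn_root S))"

definition spn_size :: "spn \<Rightarrow> nat" where
  "spn_size S = card (spn_nodes S) + (\<Sum>n \<in> spn_nodes S. length (node_children (spn_lbl S n)))"

text \<open>Terminal nodes are literals (i, b) (x_i if b, bar x_i otherwise); nonterminal nodes
 are natural numbers. 'p is the type of parameters.\<close>
datatype gsym = Tm "nat \<times> bool" | Nt nat

record 'p aog =
  aog_terms :: "(nat \<times> bool) set"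
  aog_ands  :: "nat set"
  aog_ors   :: "nat set"
  aog_start :: nat
  aog_and_rule :: "nat \<Rightarrow> gsym list \<times> ('p list \<Rightarrow> bool) \<times> ('p list \<Rightarrow> 'p)"
  aog_or_rules :: "(nat \<times> gsym \<times> real) set"

definition aog_symbols :: "'p aog \<Rightarrow> gsym set" where
  "aog_symbols G = Tm ` aog_terms G \<union> Nt ` (aog_ands G \<union> aog_ors G)"

definition aog_wf :: "'p aog \<Rightarrow> bool" where
  "aog_wf G \<longleftrightarrow>
     finite (aog_terms G) \<and> finite (aog_ands G) \<and> finite (aog_ors G) \<and>
     aog_ands G \<inter> aog_ors G = {} \<and>
     aog_start G \<in> aog_ands G \<union> aog_ors G \<and>
     (\<forall>A \<in> aog_ands G. 2 \<le> length (fst (aog_and_rule G A)) \<and>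
        distinct (fst (aog_and_rule G A)) \<and>
        set (fst (aog_and_rule G A)) \<subseteq> aog_symbols G) \<and>
     finite (aog_or_rules G) \<and>
     (\<forall>(B, x, p) \<in> aog_or_rules G. B \<in> aog_ors G \<and> x \<in> aog_symbols G \<and> 0 \<le> p) \<and>
     (\<forall>B \<in> aog_ors G. (\<Sum>r \<in> {r \<in> aog_or_rules G. fst r = B}. snd (snd r)) = 1)"

definition aog_size :: "'p aog \<Rightarrow> nat" where
  "aog_size G = card (aog_terms G) + card (aog_ands G) + card (aog_ors G)
     + (\<Sum>A \<in> aog_ands G. length (fst (aog_and_rule G A))) + card (aog_or_rules G)"

text \<open>Parse trees: nodes are instances of grammar nodes carrying a parameter. An Or-node
 instance records the Or-rule (O -> x, p) it is expanded by.\<close>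
datatype 'p ptree =
    PT "nat \<times> bool" 'p
  | PAnd nat 'p "'p ptree list"
  | POr nat 'p gsym real "'p ptree"

fun psym :: "'p ptree \<Rightarrow> gsym" where
  "psym (PT l th) = Tm l"
| "psym (PAnd A th ts) = Nt A"
| "psym (POr B th x p t) = Nt B"

fun ptheta :: "'p ptree \<Rightarrow> 'p" where
  "ptheta (PT l th) = th"
| "ptheta (PAnd A th ts) = th"
| "ptheta (POr B th x p t) = th"

fun pleaves :: "'p ptree \<Rightarrow> ((nat \<times> bool) \<times> 'p) list" where
  "pleaves (PT l th) = [(l, th)]"
| "pleaves (PAnd A th ts) = concat (map pleaves ts)"
| "pleaves (POr B th x p t) = pleaves t"

fun pprob :: "'p ptree \<Rightarrow> real" where
  "pprob (PT l th) = 1"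
| "pprob (PAnd A th ts) = prod_list (map pprob ts)"
| "pprob (POr B th x p t) = p * pprob t"

fun pvalid :: "'p aog \<Rightarrow> 'p ptree \<Rightarrow> bool" where
  "pvalid G (PT l th) = (l \<in> aog_terms G)"
| "pvalid G (PAnd A th ts) =
     (A \<in> aog_ands G \<and>
      map psym ts = fst (aog_and_rule G A) \<and>
      fst (snd (aog_and_rule G A)) (map ptheta ts) \<and>
      th = snd (snd (aog_and_rule G A)) (map ptheta ts) \<and>
      list_all (pvalid G) ts)"
| "pvalid G (POr B th x p t) =
     (B \<in> aog_ors G \<and> (B, x, p) \<in> aog_or_rules G \<and> psym t = x \<and>
      th = ptheta t \<and> pvalid G t)"

definition aog_parses :: "'p aog \<Rightarrow> ((nat \<times> bool) \<times> 'p) set \<Rightarrow> 'p ptree set" where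
  "aog_parses G D = {t. pvalid G t \<and> psym t = Nt (aog_start G) \<and>
                        distinct (pleaves t) \<and> set (pleaves t) = D}"

definition aog_marginal :: "'p aog \<Rightarrow> ((nat \<times> bool) \<times> 'p) set \<Rightarrow> real" where
  "aog_marginal G D = (\<Sum>\<^sub>\<infinity>t \<in> aog_parses G D. pprob t)"

text \<open>The data sample of an assignment: for each variable x_i one terminal instance of the
 literal it satisfies (x_i or bar x_i), with the variable index as its parameter.\<close>
definition assignment_sample :: "nat \<Rightarrow> bool list \<Rightarrow> ((nat \<times> bool) \<times> nat) set" where
  "assignment_sample d xs = {((i, xs ! i), i) | i. i < d}"

end

theory Submission
  imports Defs
begin

text \<open>For a node n of the SPN let Z n be the sum of its value over all assignments of the
  variables in its scope. Z is additive at sum nodes and, because the children of a product node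
  have disjoint scopes, multiplicative at product nodes. Renormalising every sum node by Z turns
  the SPN into a grammar with one nonterminal per node: a sum node becomes an Or-node choosing
  child c with probability w_c Z_c / Z_n, a product node an And-node and a leaf an Or-node
  producing its literal. Disjointness of scopes makes the parses of the sample of an assignment
  below n correspond to the ways of splitting it among the children, so by induction the total
  probability of these parses is the value of n divided by Z n. At the root this is the
  normalised SPN probability.\<close>

section \<open>Sums over assignments\<close>

abbreviation assignments :: "nat \<Rightarrow> bool list set" where
  "assignments d \<equiv> {ys. length ys = d}"

lemma finite_assignments: "finite (assignments d)"
  and card_assignments: "card (assignments d) = 2 ^ d"
proof -
  have eq: "assignments d = {ys. set ys \<subseteq> UNIV \<and> length ys = d}" by simp
  show "finite (assignments d)" unfolding eq by (rule finite_lists_length_eq) simp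
  show "card (assignments d) = 2 ^ d" unfolding eq by (subst card_lists_length_eq) simp_all
qed

definition depends_only :: "nat \<Rightarrow> (bool list \<Rightarrow> 'a) \<Rightarrow> nat set \<Rightarrow> bool" where
  "depends_only d f A \<longleftrightarrow>
     (\<forall>ys \<in> assignments d. \<forall>zs \<in> assignments d. (\<forall>i\<in>A. ys ! i = zs ! i) \<longrightarrow> f ys = f zs)"

lemma depends_onlyD:
  "depends_only d f A \<Longrightarrow> length ys = d \<Longrightarrow> length zs = d \<Longrightarrow>
    (\<And>i. i \<in> A \<Longrightarrow> ys ! i = zs ! i) \<Longrightarrow> f ys = f zs"
  unfolding depends_only_def by blast

lemma sum_mult_independent:
  fixes f g :: "bool list \<Rightarrow> 'a::comm_semiring_1"
  assumes AB: "A \<inter> B = {}" "A \<subseteq> {..<d}" "B \<subseteq> {..<d}"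
    and f: "depends_only d f A" and g: "depends_only d g B"
  shows "2 ^ d * (\<Sum>ys\<in>assignments d. f ys * g ys) =
         (\<Sum>ys\<in>assignments d. f ys) * (\<Sum>ys\<in>assignments d. g ys)"
proof -
  let ?X = "assignments d \<times> assignments d"
  define mix where "mix y z = map (\<lambda>i. if i \<in> A then y ! i else z ! i) [0..<d]" for y z :: "bool list"
  \<comment> \<open>Exchanging the coordinates in A of two assignments is an involution of pairs of
    assignments that turns f y * g z into f y' * g y'.\<close>
  define swap where "swap p = (mix (fst p) (snd p), mix (snd p) (fst p))" for p
  have mix_nth: "i < d \<Longrightarrow> mix y z ! i = (if i \<in> A then y ! i else z ! i)" for i y z
    by (simp add: mix_def)
  have swap_swap: "swap (swap p) = p" if "p \<in> ?X" for p
    using that by (cases p) (auto intro!: nth_equalityI simp: swap_def mix_def)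
  have swap_closed: "swap p \<in> ?X" for p
    by (simp add: swap_def mix_def)
  have swap_prod: "f (fst (swap p)) * g (fst (swap p)) = f (fst p) * g (snd p)" if X: "p \<in> ?X" for p
  proof -
    obtain y z where p: "p = (y, z)" "length y = d" "length z = d"
      using X by (cases p) auto
    have "f (mix y z) = f y"
    proof (rule depends_onlyD[OF f])
      fix i assume "i \<in> A"
      with AB show "mix y z ! i = y ! i" by (auto simp: mix_nth)
    qed (simp_all add: mix_def p)
    moreover have "g (mix y z) = g z"
    proof (rule depends_onlyD[OF g])
      fix i assume "i \<in> B"
      with AB have "i < d" "i \<notin> A" by auto
      then show "mix y z ! i = z ! i" by (simp add: mix_nth)
    qed (simp_all add: mix_def p)
    ultimately show ?thesis by (simp add: swap_def p)
  qed
  have "(\<Sum>ys\<in>assignments d. f ys) * (\<Sum>ys\<in>assignments d. g ys) = (\<Sum>p\<in>?X. f (fst p) * g (snd p))"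
    by (simp add: sum_product sum.cartesian_product case_prod_beta)
  also have "\<dots> = (\<Sum>p\<in>?X. f (fst p) * g (fst p))"
    by (rule sum.reindex_bij_witness[where i=swap and j=swap]) (use swap_swap swap_closed swap_prod in auto)
  also have "\<dots> = (\<Sum>y\<in>assignments d. \<Sum>z\<in>assignments d. f y * g y)"
    unfolding sum.cartesian_product by (simp only: case_prod_unfold)
  also have "\<dots> = 2 ^ d * (\<Sum>ys\<in>assignments d. f ys * g ys)"
    by (simp add: card_assignments sum_distrib_left)
  finally show ?thesis by simp
qed

text \<open>For f depending only on the variables in A, a subset of {..<d}, this is the sum of f
  over the 2^|A| assignments of those variables.\<close>
definition marginal_sum :: "nat \<Rightarrow> nat set \<Rightarrow> (bool list \<Rightarrow> real) \<Rightarrow> real" where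
  "marginal_sum d A f = (\<Sum>ys\<in>assignments d. f ys) / 2 ^ (d - card A)"

lemma marginal_sum_mult:
  assumes "A \<inter> B = {}" "A \<subseteq> {..<d}" "B \<subseteq> {..<d}"
    and "depends_only d f A" "depends_only d g B"
  shows "marginal_sum d (A \<union> B) (\<lambda>ys. f ys * g ys) = marginal_sum d A f * marginal_sum d B g"
proof -
  have card: "card (A \<union> B) = card A + card B"
    using assms(1-3) by (simp add: card_Un_disjoint finite_subset)
  have "card (A \<union> B) \<le> d"
    using assms(2,3) card_mono[of "{..<d}" "A \<union> B"] by simp
  then have "(d - card A) + (d - card B) = d + (d - card (A \<union> B))"
    using card by simp
  then have "(2::real) ^ (d - card A) * 2 ^ (d - card B) = 2 ^ d * 2 ^ (d - card (A \<union> B))"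
    by (metis power_add)
  then show ?thesis
    using sum_mult_independent[OF assms] unfolding marginal_sum_def by (simp add: field_simps)
qed

lemma marginal_sum_prod_list:
  assumes "sorted_wrt (\<lambda>a b. A a \<inter> A b = {}) cs"
    and "\<And>c. c \<in> set cs \<Longrightarrow> A c \<subseteq> {..<d}"
    and "\<And>c. c \<in> set cs \<Longrightarrow> depends_only d (f c) (A c)"
  shows "marginal_sum d (\<Union>c\<in>set cs. A c) (\<lambda>ys. \<Prod>c\<leftarrow>cs. f c ys) =
         (\<Prod>c\<leftarrow>cs. marginal_sum d (A c) (f c))"
  using assms
proof (induction cs)
  case Nil
  then show ?case by (simp add: marginal_sum_def card_assignments)
next
  case (Cons c cs)
  have "depends_only d (\<lambda>ys. \<Prod>c\<leftarrow>cs. f c ys) (\<Union>c\<in>set cs. A c)"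
    unfolding depends_only_def
  proof (intro ballI impI)
    fix ys zs assume "ys \<in> assignments d" "zs \<in> assignments d" "\<forall>i\<in>\<Union>c\<in>set cs. A c. ys ! i = zs ! i"
    then have "f c' ys = f c' zs" if "c' \<in> set cs" for c'
      using that Cons.prems(3) by (intro depends_onlyD[of d "f c'" "A c'"]) auto
    then show "(\<Prod>c\<leftarrow>cs. f c ys) = (\<Prod>c\<leftarrow>cs. f c zs)"
      by (metis (mono_tags, lifting) map_eq_conv)
  qed
  then have "marginal_sum d (A c \<union> (\<Union>c\<in>set cs. A c)) (\<lambda>ys. f c ys * (\<Prod>c\<leftarrow>cs. f c ys)) =
      marginal_sum d (A c) (f c) * marginal_sum d (\<Union>c\<in>set cs. A c) (\<lambda>ys. \<Prod>c\<leftarrow>cs. f c ys)"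
    using Cons.prems by (intro marginal_sum_mult) auto
  then show ?case using Cons by simp
qed

lemma marginal_sum_literal:
  assumes "i < d"
  shows "marginal_sum d {i} (\<lambda>ys. if ys ! i = b then 1 else 0) = 1"
proof -
  let ?T = "{ys \<in> assignments d. ys ! i = b}" and ?F = "{ys \<in> assignments d. ys ! i \<noteq> b}"
  define flip where "flip ys = ys[i := \<not> ys ! i]" for ys :: "bool list"
  have flip: "length (flip ys) = d" "flip ys ! i = (\<not> ys ! i)" "flip (flip ys) = ys"
    if "length ys = d" for ys
    using that assms by (simp_all add: flip_def)
  have "bij_betw flip ?T ?F"
    by (rule bij_betwI[where g=flip]) (auto simp: flip)
  then have "card ?T = card ?F" by (rule bij_betw_same_card)
  moreover have "card ?T + card ?F = card (assignments d)"
  proof -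
    have "finite ?T" by (rule finite_subset[OF _ finite_assignments[of d]]) blast
    moreover have "finite ?F" by (rule finite_subset[OF _ finite_assignments[of d]]) blast
    ultimately have "card (?T \<union> ?F) = card ?T + card ?F"
      by (rule card_Un_disjoint) blast
    moreover have "?T \<union> ?F = assignments d" by blast
    ultimately show ?thesis by metis
  qed
  ultimately have "card ?T + card ?T = 2 ^ d"
    using card_assignments[of d] by linarith
  moreover have "(2::nat) ^ d = 2 ^ (d - 1) + 2 ^ (d - 1)"
    using assms by (cases d) simp_all
  ultimately have "card ?T = 2 ^ (d - 1)" by linarith
  then have "real (card ?T) = 2 ^ (d - 1)" by simp
  moreover have "(\<Sum>ys\<in>assignments d. if ys ! i = b then 1 else 0) = real (card ?T)"
    by (simp add: sum.inter_filter[OF finite_assignments, symmetric])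
  ultimately show ?thesis by (simp add: marginal_sum_def)
qed

lemma list_all2_right_unique:
  "list_all2 (\<lambda>a v. Q a v \<and> (\<forall>v'. Q a v' \<longrightarrow> v = v')) as vs \<Longrightarrow> list_all2 Q as vs' \<Longrightarrow> vs = vs'"
  by (induction as vs arbitrary: vs' rule: list_all2_induct) (auto simp: list_all2_Cons1)

lemma list_all2_conj:
  "list_all2 (\<lambda>x y. P x y \<and> Q x y) xs ys \<longleftrightarrow> list_all2 P xs ys \<and> list_all2 Q xs ys"
  by (auto simp: list_all2_conv_all_nth)

lemma list_all2_conj_map_eq:
  "list_all2 (\<lambda>c t. P t \<and> f t = g c) cs ts \<longleftrightarrow> map f ts = map g cs \<and> list_all P ts"
  by (induction ts arbitrary: cs) (auto simp: list_all2_Cons2 Cons_eq_map_conv)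

lemma prod_list_map_mult:
  "(\<Prod>x\<leftarrow>xs. f x) * (\<Prod>x\<leftarrow>xs. g x) = (\<Prod>x\<leftarrow>xs. f x * g x :: 'a::comm_monoid_mult)"
  by (induction xs) (simp_all add: ac_simps)

lemma list_all2_mem_Nil_eq: "{ts. list_all2 (\<lambda>c t. t \<in> P c) [] ts} = {[]}"
  and list_all2_mem_Cons_eq:
    "{ts. list_all2 (\<lambda>c t. t \<in> P c) (c # cs) ts} =
     (\<lambda>(t, ts). t # ts) ` (P c \<times> {ts. list_all2 (\<lambda>c t. t \<in> P c) cs ts})"
  by (auto simp: list_all2_Cons1)

lemma finite_list_all2_mem:
  "(\<And>c. c \<in> set cs \<Longrightarrow> finite (P c)) \<Longrightarrow> finite {ts. list_all2 (\<lambda>c t. t \<in> P c) cs ts}"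
  by (induction cs) (simp_all add: list_all2_mem_Nil_eq list_all2_mem_Cons_eq)

lemma sum_prod_list_list_all2_mem:
  fixes h :: "'t \<Rightarrow> 'a::comm_semiring_1"
  assumes "\<And>c. c \<in> set cs \<Longrightarrow> finite (P c)"
  shows "(\<Sum>ts | list_all2 (\<lambda>c t. t \<in> P c) cs ts. \<Prod>t\<leftarrow>ts. h t) = (\<Prod>c\<leftarrow>cs. \<Sum>t\<in>P c. h t)"
  using assms
proof (induction cs)
  case Nil
  then show ?case by (simp add: list_all2_mem_Nil_eq)
next
  case (Cons c cs)
  let ?X = "{ts. list_all2 (\<lambda>c t. t \<in> P c) cs ts}"
  have "inj_on (\<lambda>(t, ts). t # ts) (P c \<times> ?X)" by (auto simp: inj_on_def)
  then have "(\<Sum>ts | list_all2 (\<lambda>c t. t \<in> P c) (c # cs) ts. \<Prod>t\<leftarrow>ts. h t) =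
      (\<Sum>(t, ts)\<in>P c \<times> ?X. h t * (\<Prod>t\<leftarrow>ts. h t))"
    unfolding list_all2_mem_Cons_eq by (subst sum.reindex) (simp_all add: case_prod_beta)
  also have "\<dots> = (\<Sum>t\<in>P c. h t) * (\<Sum>ts\<in>?X. \<Prod>t\<leftarrow>ts. h t)"
    by (simp add: sum_product sum.cartesian_product)
  finally show ?case using Cons by simp
qed

section \<open>Parses of And-Or grammars\<close>

definition literal_sample :: "bool list \<Rightarrow> nat set \<Rightarrow> ((nat \<times> bool) \<times> nat) set" where
  "literal_sample xs A = {((i, xs ! i), i) | i. i \<in> A}"

lemma assignment_sample_eq: "assignment_sample d xs = literal_sample xs {..<d}"
  by (auto simp: assignment_sample_def literal_sample_def)

lemma literal_sample_Un: "literal_sample xs (A \<union> B) = literal_sample xs A \<union> literal_sample xs B"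
  by (auto simp: literal_sample_def)

lemma literal_sample_vars: "e \<in> literal_sample xs A \<Longrightarrow> fst (fst e) \<in> A"
  by (auto simp: literal_sample_def)

lemma Un_eq_literal_sample_Un_iff:
  assumes "A \<inter> B = {}" "fst ` fst ` X \<subseteq> A" "fst ` fst ` Y \<subseteq> B"
  shows "X \<union> Y = literal_sample xs A \<union> literal_sample xs B \<longleftrightarrow>
         X = literal_sample xs A \<and> Y = literal_sample xs B"
  using assms literal_sample_vars[of _ xs A] literal_sample_vars[of _ xs B]
  unfolding image_subset_iff by fastforce

lemma concat_eq_literal_sample_iff:
  assumes "list_all2 (\<lambda>A l. fst ` fst ` set l \<subseteq> A) As ls"
    and "sorted_wrt (\<lambda>A B. A \<inter> B = {}) As"
  shows "distinct (concat ls) \<and> set (concat ls) = literal_sample xs (\<Union>(set As)) \<longleftrightarrow>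
         list_all2 (\<lambda>A l. distinct l \<and> set l = literal_sample xs A) As ls"
  using assms
proof (induction As ls rule: list_all2_induct)
  case Nil
  then show ?case by (simp add: literal_sample_def)
next
  case (Cons A As l ls)
  have disjoint: "A \<inter> \<Union>(set As) = {}" using Cons.prems by auto
  have "fst ` fst ` set (concat ls) \<subseteq> \<Union>(set As)"
    using Cons.hyps(2) by (induction As ls rule: list_all2_induct) (auto simp: image_subset_iff)
  then have "set l \<inter> set (concat ls) = {}"
    using disjoint Cons.hyps(1) by blast
  moreover have "set l \<union> set (concat ls) = literal_sample xs A \<union> literal_sample xs (\<Union>(set As)) \<longleftrightarrow>
      set l = literal_sample xs A \<and> set (concat ls) = literal_sample xs (\<Union>(set As))"
    by (rule Un_eq_literal_sample_Un_iff) fact+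
  ultimately have "distinct (concat (l # ls)) \<and> set (concat (l # ls)) = literal_sample xs (\<Union>(set (A # As)))
      \<longleftrightarrow> (distinct l \<and> set l = literal_sample xs A) \<and>
          (distinct (concat ls) \<and> set (concat ls) = literal_sample xs (\<Union>(set As)))"
    by (auto simp only: concat.simps distinct_append set_append set_simps Union_insert literal_sample_Un)
  also have "\<dots> \<longleftrightarrow> list_all2 (\<lambda>A l. distinct l \<and> set l = literal_sample xs A) (A # As) (l # ls)"
    using Cons.IH Cons.prems by simp
  finally show ?case .
qed

definition aog_alternatives :: "'p aog \<Rightarrow> nat \<Rightarrow> (gsym \<times> real) set" where
  "aog_alternatives G B = {(x, p). (B, x, p) \<in> aog_or_rules G}"

definition aog_sym_parses :: "'p aog \<Rightarrow> gsym \<Rightarrow> ((nat \<times> bool) \<times> 'p) set \<Rightarrow> 'p ptree set" where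
  "aog_sym_parses G x D = {t. pvalid G t \<and> psym t = x \<and> distinct (pleaves t) \<and> set (pleaves t) = D}"

lemma aog_parses_eq_sym_parses: "aog_parses G D = aog_sym_parses G (Nt (aog_start G)) D"
  by (simp add: aog_parses_def aog_sym_parses_def)

lemma aog_sym_parses_Tm:
  "aog_sym_parses G (Tm l) D = (if l \<in> aog_terms G then PT l ` {th. D = {(l, th)}} else {})"
proof -
  have "psym t = Tm l \<longleftrightarrow> (\<exists>th. t = PT l th)" for t :: "'a ptree"
    by (cases t) auto
  then show ?thesis by (auto simp: aog_sym_parses_def)
qed

lemma finite_sym_parses_Tm: "finite (aog_sym_parses G (Tm l) D)"
proof (cases "\<exists>th. D = {(l, th)}")
  case True
  then obtain th where "D = {(l, th)}" by blast
  then have "{th'. D = {(l, th')}} = {th}" by auto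
  then show ?thesis by (simp add: aog_sym_parses_Tm)
qed (simp add: aog_sym_parses_Tm)

lemma aog_sym_parses_Or:
  assumes "B \<in> aog_ors G" "B \<notin> aog_ands G"
  shows "aog_sym_parses G (Nt B) D =
    (\<lambda>((x, p), t). POr B (ptheta t) x p t) ` (SIGMA a:aog_alternatives G B. aog_sym_parses G (fst a) D)"
proof (intro set_eqI iffI)
  fix t assume "t \<in> aog_sym_parses G (Nt B) D"
  then show "t \<in> (\<lambda>((x, p), t). POr B (ptheta t) x p t) ` (SIGMA a:aog_alternatives G B. aog_sym_parses G (fst a) D)"
    using assms(2) by (cases t) (force simp: aog_sym_parses_def aog_alternatives_def)+
qed (use assms(1) in \<open>auto simp: aog_sym_parses_def aog_alternatives_def\<close>)

lemma
  assumes "B \<in> aog_ors G" "B \<notin> aog_ands G" "finite (aog_alternatives G B)"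
    and "\<And>x p. (x, p) \<in> aog_alternatives G B \<Longrightarrow> finite (aog_sym_parses G x D)"
  shows finite_sym_parses_Or: "finite (aog_sym_parses G (Nt B) D)"
    and sum_pprob_sym_parses_Or: "(\<Sum>t\<in>aog_sym_parses G (Nt B) D. pprob t) =
         (\<Sum>(x, p)\<in>aog_alternatives G B. p * (\<Sum>t\<in>aog_sym_parses G x D. pprob t))"
proof -
  let ?P = "SIGMA a:aog_alternatives G B. aog_sym_parses G (fst a) D"
  have fin: "finite ?P" using assms(3,4) by auto
  then show "finite (aog_sym_parses G (Nt B) D)"
    unfolding aog_sym_parses_Or[OF assms(1,2)] by simp
  have "inj_on (\<lambda>((x, p), t). POr B (ptheta t) x p t) ?P" by (auto simp: inj_on_def)
  then have "(\<Sum>t\<in>aog_sym_parses G (Nt B) D. pprob t) = (\<Sum>((x, p), t)\<in>?P. p * pprob t)"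
    unfolding aog_sym_parses_Or[OF assms(1,2)] by (subst sum.reindex) (auto intro!: sum.cong)
  also have "\<dots> = (\<Sum>(x, p)\<in>aog_alternatives G B. p * (\<Sum>t\<in>aog_sym_parses G x D. pprob t))"
    using assms(3,4) by (subst sum.Sigma[symmetric]) (auto simp: case_prod_beta sum_distrib_left)
  finally show "(\<Sum>t\<in>aog_sym_parses G (Nt B) D. pprob t) =
      (\<Sum>(x, p)\<in>aog_alternatives G B. p * (\<Sum>t\<in>aog_sym_parses G x D. pprob t))" .
qed

definition unparsable_aog :: "nat aog" where
  "unparsable_aog = \<lparr>aog_terms = {(0, True), (0, False)}, aog_ands = {0}, aog_ors = {},
     aog_start = 0, aog_and_rule = (\<lambda>_. ([Tm (0, True), Tm (0, False)], \<lambda>_. False, \<lambda>_. 0)),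
     aog_or_rules = {}\<rparr>"

lemma aog_wf_unparsable_aog: "aog_wf unparsable_aog"
  by (simp add: aog_wf_def unparsable_aog_def aog_symbols_def)

lemma aog_size_unparsable_aog: "aog_size unparsable_aog = 5"
  by (simp add: aog_size_def unparsable_aog_def)

lemma aog_marginal_unparsable_aog: "aog_marginal unparsable_aog D = 0"
proof -
  have "\<not> (pvalid unparsable_aog t \<and> psym t = Nt 0)" for t
    by (cases t) (auto simp: unparsable_aog_def)
  then have "aog_parses unparsable_aog D = {}"
    by (auto simp: aog_parses_def unparsable_aog_def)
  then show ?thesis by (simp add: aog_marginal_def)
qed

section \<open>Decomposable sum-product networks\<close>

lemma mem_spn_edges [simp]:
  "(c, n) \<in> spn_edges S \<longleftrightarrow> n \<in> spn_nodes S \<and> c \<in> set (node_children (spn_lbl S n))"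
  by (simp add: spn_edges_def)

lemma spn_leaves_unfold:
  "spn_leaves S n = (case spn_lbl S n of Leaf i b \<Rightarrow> {(i, b)} | _ \<Rightarrow> {}) \<union>
     (if n \<in> spn_nodes S then (\<Union>c\<in>set (node_children (spn_lbl S n)). spn_leaves S c) else {})"
proof (rule set_eqI, safe)
  fix i b assume "(i, b) \<in> spn_leaves S n"
    and "(i, b) \<notin> (if n \<in> spn_nodes S then \<Union>c\<in>set (node_children (spn_lbl S n)). spn_leaves S c else {})"
  then obtain m where m: "(m, n) \<in> (spn_edges S)\<^sup>*" "spn_lbl S m = Leaf i b"
    and not_below: "\<not> (n \<in> spn_nodes S \<and> (\<exists>c\<in>set (node_children (spn_lbl S n)). (i, b) \<in> spn_leaves S c))"
    by (auto simp: spn_leaves_def split: if_splits)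
  from m(1) show "(i, b) \<in> (case spn_lbl S n of Leaf i b \<Rightarrow> {(i, b)} | _ \<Rightarrow> {})"
  proof (cases rule: rtranclE)
    case base
    then show ?thesis using m by simp
  next
    case (step c)
    then have "(i, b) \<in> spn_leaves S c" using m by (auto simp: spn_leaves_def)
    then show ?thesis using step not_below by auto
  qed
next
  fix i b assume "(i, b) \<in> (case spn_lbl S n of Leaf i b \<Rightarrow> {(i, b)} | _ \<Rightarrow> {})"
  then have "spn_lbl S n = Leaf i b" by (auto split: spn_node.splits)
  then show "(i, b) \<in> spn_leaves S n" by (auto simp: spn_leaves_def)
next
  fix i b
  assume "(i, b) \<in> (if n \<in> spn_nodes S then \<Union>c\<in>set (node_children (spn_lbl S n)). spn_leaves S c else {})"
  then obtain c m where "n \<in> spn_nodes S" "c \<in> set (node_children (spn_lbl S n))"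
      "(m, c) \<in> (spn_edges S)\<^sup>*" "spn_lbl S m = Leaf i b"
    by (auto simp: spn_leaves_def split: if_splits)
  then have "(m, n) \<in> (spn_edges S)\<^sup>*" "spn_lbl S m = Leaf i b"
    by (auto intro: rtrancl_into_rtrancl)
  then show "(i, b) \<in> spn_leaves S n" unfolding spn_leaves_def by blast
qed

lemma spn_size_pos: "spn_wf S d \<Longrightarrow> 1 \<le> spn_size S"
  using card_gt_0_iff[of "spn_nodes S"] by (auto simp: spn_wf_def spn_size_def)

locale decomposable_spn =
  fixes S :: spn and d :: nat
  assumes wf_spn: "spn_wf S d" and valid_spn: "spn_valid S" and decomposable_spn: "spn_decomposable S"
begin

abbreviation "nodes \<equiv> spn_nodes S"
abbreviation "lbl \<equiv> spn_lbl S"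
abbreviation "scope \<equiv> spn_scope S"

lemma finite_nodes: "finite nodes"
  and root_in_nodes: "spn_root S \<in> nodes"
  and wf_edges: "wf (spn_edges S)"
  and scope_root: "scope (spn_root S) = {..<d}"
  using wf_spn by (simp_all add: spn_wf_def)

lemma child_in_nodes: "n \<in> nodes \<Longrightarrow> c \<in> set (node_children (lbl n)) \<Longrightarrow> c \<in> nodes"
  using wf_spn by (auto simp: spn_wf_def)

lemma leaf_var_less: "n \<in> nodes \<Longrightarrow> lbl n = Leaf i b \<Longrightarrow> i < d"
  using wf_spn unfolding spn_wf_def by fastforce

lemma sum_node_nonempty: "n \<in> nodes \<Longrightarrow> lbl n = spn_node.Sum cs \<Longrightarrow> cs \<noteq> []"
  using wf_spn unfolding spn_wf_def by fastforce

lemma sum_weight_nonneg: "n \<in> nodes \<Longrightarrow> lbl n = spn_node.Sum cs \<Longrightarrow> (c, w) \<in> set cs \<Longrightarrow> 0 \<le> w"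
  using wf_spn unfolding spn_wf_def by fastforce

lemma prod_node_nonempty: "n \<in> nodes \<Longrightarrow> lbl n = spn_node.Prod cs \<Longrightarrow> cs \<noteq> []"
  using wf_spn unfolding spn_wf_def by fastforce

lemma node_induct [consumes 1, case_names step]:
  assumes "n \<in> nodes"
    and step: "\<And>n. n \<in> nodes \<Longrightarrow> (\<And>c. c \<in> set (node_children (lbl n)) \<Longrightarrow> P c) \<Longrightarrow> P n"
  shows "P n"
proof -
  have "n \<in> nodes \<longrightarrow> P n"
  proof (induction n rule: wf_induct[OF wf_edges])
    case (1 n)
    show ?case using 1 child_in_nodes by (auto intro: step)
  qed
  then show ?thesis using assms(1) by blast
qed

lemma node_cases [consumes 1, case_names Leaf Sum Unary Prod]:
  assumes "n \<in> nodes"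
  obtains i b where "lbl n = Leaf i b"
  | cs where "lbl n = spn_node.Sum cs"
  | c where "lbl n = spn_node.Prod [c]"
  | cs where "lbl n = spn_node.Prod cs" "2 \<le> length cs"
proof (cases "lbl n")
  case (Prod cs)
  with prod_node_nonempty[OF assms] that(3,4) show ?thesis
    by (cases cs rule: remdups_adj.cases) auto
qed (use that in blast)+

lemma scope_unfold:
  "scope n = (case lbl n of Leaf i b \<Rightarrow> {i} | _ \<Rightarrow> {}) \<union>
     (if n \<in> nodes then (\<Union>c\<in>set (node_children (lbl n)). scope c) else {})"
  unfolding spn_scope_def by (subst spn_leaves_unfold) (auto split: spn_node.splits)

lemma scope_Leaf: "lbl n = Leaf i b \<Longrightarrow> scope n = {i}"
  by (subst scope_unfold) simp

lemma scope_Sum: "n \<in> nodes \<Longrightarrow> lbl n = spn_node.Sum cs \<Longrightarrow> scope n = (\<Union>c\<in>fst ` set cs. scope c)"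
  by (subst scope_unfold) simp

lemma scope_Prod: "n \<in> nodes \<Longrightarrow> lbl n = spn_node.Prod cs \<Longrightarrow> scope n = (\<Union>c\<in>set cs. scope c)"
  by (subst scope_unfold) simp

lemma scope_nonempty: "n \<in> nodes \<Longrightarrow> scope n \<noteq> {}"
proof (induction n rule: node_induct)
  case (step n)
  show ?case
  proof (cases "lbl n")
    case (Leaf i b)
    then show ?thesis by (simp add: scope_Leaf)
  next
    case (Sum cs)
    with sum_node_nonempty[OF step(1)] obtain c w where "(c, w) \<in> set cs"
      by (cases cs) auto
    with step Sum show ?thesis by (force simp: scope_Sum)
  next
    case (Prod cs)
    with prod_node_nonempty[OF step(1)] obtain c where "c \<in> set cs"
      by (cases cs) auto
    with step Prod show ?thesis by (auto simp: scope_Prod)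
  qed
qed

lemma scope_subset: "n \<in> nodes \<Longrightarrow> scope n \<subseteq> {..<d}"
proof (induction n rule: node_induct)
  case (step n)
  then show ?case
    using leaf_var_less[OF step(1)]
    by (cases "lbl n") (force simp: scope_Leaf scope_Sum scope_Prod)+
qed

lemma scope_Sum_child:
  assumes "n \<in> nodes" "lbl n = spn_node.Sum cs" "c \<in> fst ` set cs"
  shows "scope c = scope n"
proof -
  have "\<forall>c' \<in> fst ` set cs. scope c' = scope c"
    using valid_spn assms unfolding spn_valid_def by blast
  then have "scope ` fst ` set cs = {scope c}" using assms(3) by blast
  then show ?thesis using scope_Sum[OF assms(1,2)] by simp
qed

lemma scopes_disjoint_Prod:
  "n \<in> nodes \<Longrightarrow> lbl n = spn_node.Prod cs \<Longrightarrow> sorted_wrt (\<lambda>a b. scope a \<inter> scope b = {}) cs"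
  using decomposable_spn unfolding spn_decomposable_def sorted_wrt_iff_nth_less by force

lemma distinct_Prod_children: "n \<in> nodes \<Longrightarrow> lbl n = spn_node.Prod cs \<Longrightarrow> distinct cs"
proof -
  assume n: "n \<in> nodes" "lbl n = spn_node.Prod cs"
  have "\<forall>c\<in>set cs. scope c \<noteq> {}"
    using n child_in_nodes scope_nonempty by auto
  with scopes_disjoint_Prod[OF n] show "distinct cs"
    by (induction cs) auto
qed

lemma spn_val_functional: "spn_val S xs n v \<Longrightarrow> spn_val S xs n v' \<Longrightarrow> v = v'"
proof (induction arbitrary: v' rule: spn_val.induct)
  case (leaf n i b)
  then show ?case by (auto elim: spn_val.cases)
next
  case (sum n cs vs)
  from sum.prems show ?case
    by (cases rule: spn_val.cases) (use sum list_all2_right_unique[OF sum.IH] in auto)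
next
  case (prod n cs vs)
  from prod.prems show ?case
    by (cases rule: spn_val.cases) (use prod list_all2_right_unique[OF prod.IH] in auto)
qed

lemma spn_value_eqI: "spn_val S xs n v \<Longrightarrow> spn_value S xs n = v"
  unfolding spn_value_def using spn_val_functional by blast

lemma spn_val_value: "n \<in> nodes \<Longrightarrow> spn_val S xs n (spn_value S xs n)"
proof (induction n rule: node_induct)
  case (step n)
  then have children: "list_all2 (spn_val S xs) (node_children (lbl n))
      (map (spn_value S xs) (node_children (lbl n)))"
    by (simp add: list_all2_map2 list_all2_same)
  have "\<exists>v. spn_val S xs n v"
  proof (cases "lbl n")
    case (Leaf i b)
    then show ?thesis by (blast intro: spn_val.leaf)
  next
    case (Sum cs)
    then show ?thesis using spn_val.sum[OF Sum] children by auto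
  next
    case (Prod cs)
    then show ?thesis using spn_val.prod[OF Prod] children by auto
  qed
  then show ?case using spn_value_eqI by blast
qed

lemma spn_value_Leaf: "lbl n = Leaf i b \<Longrightarrow> spn_value S xs n = (if xs ! i = b then 1 else 0)"
  by (rule spn_value_eqI) (rule spn_val.leaf)

lemma spn_value_Sum:
  assumes "n \<in> nodes" "lbl n = spn_node.Sum cs"
  shows "spn_value S xs n = (\<Sum>j<length cs. snd (cs ! j) * spn_value S xs (fst (cs ! j)))"
proof -
  have "list_all2 (spn_val S xs) (map fst cs) (map (spn_value S xs) (map fst cs))"
    unfolding list_all2_map2 list_all2_same using assms child_in_nodes spn_val_value by auto
  from spn_value_eqI[OF spn_val.sum[OF assms(2) this]]
  have "spn_value S xs n = (\<Sum>j<length cs. snd (cs ! j) * map (spn_value S xs) (map fst cs) ! j)" .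
  also have "\<dots> = (\<Sum>j<length cs. snd (cs ! j) * spn_value S xs (fst (cs ! j)))"
    by (rule sum.cong) auto
  finally show ?thesis .
qed

lemma spn_value_Prod:
  assumes "n \<in> nodes" "lbl n = spn_node.Prod cs"
  shows "spn_value S xs n = (\<Prod>c\<leftarrow>cs. spn_value S xs c)"
proof -
  have "list_all2 (spn_val S xs) cs (map (spn_value S xs) cs)"
    using assms child_in_nodes spn_val_value by (auto simp: list_all2_map2 list_all2_same)
  from spn_value_eqI[OF spn_val.prod[OF assms(2) this]] show ?thesis .
qed

lemma spn_value_nonneg: "n \<in> nodes \<Longrightarrow> 0 \<le> spn_value S xs n"
proof (induction n rule: node_induct)
  case (step n)
  show ?case
  proof (cases "lbl n")
    case (Leaf i b)
    then show ?thesis by (simp add: spn_value_Leaf)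
  next
    case (Sum cs)
    have terms: "0 \<le> snd (cs ! j) * spn_value S xs (fst (cs ! j))" if "j < length cs" for j
      using that step Sum sum_weight_nonneg[OF step(1) Sum, of "fst (cs ! j)" "snd (cs ! j)"] by force
    show ?thesis
      unfolding spn_value_Sum[OF step(1) Sum] by (rule sum_nonneg) (simp add: terms)
  next
    case (Prod cs)
    then show ?thesis using step by (auto simp: spn_value_Prod[OF step(1) Prod] intro!: prod_list_nonneg)
  qed
qed

lemma spn_value_depends_only_scope: "n \<in> nodes \<Longrightarrow> depends_only d (\<lambda>ys. spn_value S ys n) (scope n)"
proof (induction n rule: node_induct)
  case (step n)
  show ?case
    unfolding depends_only_def
  proof (intro ballI impI)
    fix ys zs assume ys: "ys \<in> assignments d" and zs: "zs \<in> assignments d"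
      and agree: "\<forall>i\<in>scope n. ys ! i = zs ! i"
    have child: "spn_value S ys c = spn_value S zs c" if "c \<in> set (node_children (lbl n))" for c
    proof (rule depends_onlyD[OF step(2)[OF that]])
      fix i assume "i \<in> scope c"
      then show "ys ! i = zs ! i"
        using agree that step(1) by (cases "lbl n") (auto simp: scope_Sum scope_Prod)
    qed (use ys zs in auto)
    show "spn_value S ys n = spn_value S zs n"
    proof (cases "lbl n")
      case (Leaf i b)
      then show ?thesis using agree by (simp add: spn_value_Leaf scope_Leaf)
    next
      case (Sum cs)
      then show ?thesis using child by (simp add: spn_value_Sum[OF step(1) Sum])
    next
      case (Prod cs)
      then have "(\<Prod>c\<leftarrow>cs. spn_value S ys c) = (\<Prod>c\<leftarrow>cs. spn_value S zs c)"
        using child by (auto intro!: arg_cong[where f=prod_list])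
      then show ?thesis by (simp only: spn_value_Prod[OF step(1) Prod])
    qed
  qed
qed

definition Z :: "nat \<Rightarrow> real" where
  "Z n = marginal_sum d (scope n) (\<lambda>ys. spn_value S ys n)"

lemma Z_nonneg: "n \<in> nodes \<Longrightarrow> 0 \<le> Z n"
  unfolding Z_def marginal_sum_def by (intro divide_nonneg_pos sum_nonneg spn_value_nonneg) auto

lemma spn_value_eq_0_if_Z_eq_0:
  assumes "n \<in> nodes" "Z n = 0" "length xs = d"
  shows "spn_value S xs n = 0"
proof -
  have "(\<Sum>ys\<in>assignments d. spn_value S ys n) = 0"
    using assms(2) by (simp add: Z_def marginal_sum_def)
  then have "\<forall>ys\<in>assignments d. spn_value S ys n = 0"
    using sum_nonneg_eq_0_iff[OF finite_assignments[of d], of "\<lambda>ys. spn_value S ys n"]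
      spn_value_nonneg[OF assms(1)] by simp
  then show ?thesis using assms(3) by simp
qed

lemma Z_root: "Z (spn_root S) = (\<Sum>ys\<in>assignments d. spn_value S ys (spn_root S))"
  by (simp add: Z_def marginal_sum_def scope_root)

lemma Z_Leaf: "n \<in> nodes \<Longrightarrow> lbl n = Leaf i b \<Longrightarrow> Z n = 1"
  by (simp add: Z_def scope_Leaf spn_value_Leaf marginal_sum_literal leaf_var_less)

lemma Z_Sum:
  assumes "n \<in> nodes" "lbl n = spn_node.Sum cs"
  shows "Z n = (\<Sum>j<length cs. snd (cs ! j) * Z (fst (cs ! j)))"
proof -
  have "Z n = (\<Sum>ys\<in>assignments d. \<Sum>j<length cs. snd (cs ! j) * spn_value S ys (fst (cs ! j))) /
      2 ^ (d - card (scope n))"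
    by (simp add: Z_def marginal_sum_def spn_value_Sum[OF assms])
  also have "\<dots> = (\<Sum>j<length cs. snd (cs ! j) * marginal_sum d (scope n) (\<lambda>ys. spn_value S ys (fst (cs ! j))))"
    by (subst sum.swap) (simp add: marginal_sum_def sum_divide_distrib sum_distrib_left)
  also have "\<dots> = (\<Sum>j<length cs. snd (cs ! j) * Z (fst (cs ! j)))"
    using scope_Sum_child[OF assms] by (intro sum.cong) (auto simp: Z_def)
  finally show ?thesis .
qed

lemma Z_Prod:
  assumes "n \<in> nodes" "lbl n = spn_node.Prod cs"
  shows "Z n = (\<Prod>c\<leftarrow>cs. Z c)"
proof -
  have children: "c \<in> nodes" if "c \<in> set cs" for c
    using child_in_nodes[OF assms(1)] that assms(2) by simp
  have "Z n = marginal_sum d (\<Union>c\<in>set cs. scope c) (\<lambda>ys. \<Prod>c\<leftarrow>cs. spn_value S ys c)"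
    by (simp add: Z_def scope_Prod[OF assms] spn_value_Prod[OF assms])
  also have "\<dots> = (\<Prod>c\<leftarrow>cs. Z c)"
    unfolding Z_def using scopes_disjoint_Prod[OF assms] children scope_subset spn_value_depends_only_scope
    by (intro marginal_sum_prod_list) auto
  finally show ?thesis .
qed

section \<open>The And-Or grammar of an SPN\<close>

text \<open>And-rules need at least two children, so a product node with a single child becomes an
  Or-node with a single rule.\<close>
definition and_nodes :: "nat set" where
  "and_nodes = {n \<in> nodes. \<exists>cs. lbl n = spn_node.Prod cs \<and> 2 \<le> length cs}"

definition or_nodes :: "nat set" where
  "or_nodes = nodes - and_nodes"

text \<open>Duplicate children of a sum node share one Or-rule. If Z n = 0, the value of n vanishes
  everywhere and any distribution over the children will do.\<close>
definition branch_prob :: "nat \<Rightarrow> nat \<Rightarrow> real" where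
  "branch_prob n c = (case lbl n of
     spn_node.Sum cs \<Rightarrow>
       if Z n = 0 then (if c = fst (hd cs) then 1 else 0)
       else (\<Sum>j | j < length cs \<and> fst (cs ! j) = c. snd (cs ! j) * Z c) / Z n
   | _ \<Rightarrow> 0)"

definition alternatives :: "nat \<Rightarrow> (gsym \<times> real) set" where
  "alternatives n = (case lbl n of
     Leaf i b \<Rightarrow> {(Tm (i, b), 1)}
   | spn_node.Sum cs \<Rightarrow> (\<lambda>c. (Nt c, branch_prob n c)) ` fst ` set cs
   | spn_node.Prod cs \<Rightarrow> if length cs = 1 then {(Nt (hd cs), 1)} else {})"

definition leaf_literals :: "(nat \<times> bool) set" where
  "leaf_literals = {(i, b). \<exists>n\<in>nodes. lbl n = Leaf i b}"

definition spn_aog :: "nat aog" where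
  "spn_aog = \<lparr>aog_terms = leaf_literals, aog_ands = and_nodes, aog_ors = or_nodes,
     aog_start = spn_root S,
     aog_and_rule = (\<lambda>n. (map Nt (node_children (lbl n)), \<lambda>_. True, \<lambda>_. 0)),
     aog_or_rules = Sigma nodes alternatives\<rparr>"

lemma leaf_literals_subset: "leaf_literals \<subseteq> (\<lambda>n. case lbl n of Leaf i b \<Rightarrow> (i, b)) ` nodes"
  by (force simp: leaf_literals_def)

lemma spn_aog_simps [simp]:
  "aog_terms spn_aog = leaf_literals" "aog_ands spn_aog = and_nodes" "aog_ors spn_aog = or_nodes"
  "aog_start spn_aog = spn_root S"
  "aog_and_rule spn_aog n = (map Nt (node_children (lbl n)), \<lambda>_. True, \<lambda>_. 0)"
  "aog_or_rules spn_aog = Sigma nodes alternatives"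
  by (simp_all add: spn_aog_def)

lemma aog_alternatives_spn_aog: "n \<in> nodes \<Longrightarrow> aog_alternatives spn_aog n = alternatives n"
  by (auto simp: aog_alternatives_def)

lemma aog_symbols_spn_aog: "aog_symbols spn_aog = Tm ` leaf_literals \<union> Nt ` nodes"
  by (auto simp: aog_symbols_def and_nodes_def or_nodes_def)

lemma alternatives_Leaf: "lbl n = Leaf i b \<Longrightarrow> alternatives n = {(Tm (i, b), 1)}"
  by (simp add: alternatives_def)

lemma alternatives_Sum:
  "lbl n = spn_node.Sum cs \<Longrightarrow> alternatives n = (\<lambda>c. (Nt c, branch_prob n c)) ` fst ` set cs"
  by (simp add: alternatives_def)

lemma alternatives_Unary: "lbl n = spn_node.Prod [c] \<Longrightarrow> alternatives n = {(Nt c, 1)}"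
  by (simp add: alternatives_def)

lemma alternatives_Prod: "lbl n = spn_node.Prod cs \<Longrightarrow> 2 \<le> length cs \<Longrightarrow> alternatives n = {}"
  by (simp add: alternatives_def)

lemma finite_alternatives: "finite (alternatives n)"
  by (simp add: alternatives_def split: spn_node.splits)

lemma card_alternatives_le: "card (alternatives n) \<le> 1 + length (node_children (lbl n))"
proof (cases "lbl n")
  case (Sum cs)
  have "card (alternatives n) \<le> card (set (map fst cs))"
    using Sum by (simp add: alternatives_Sum card_image_le)
  also have "\<dots> \<le> length (node_children (lbl n))" using Sum card_length[of "map fst cs"] by simp
  finally show ?thesis by simp
qed (simp_all add: alternatives_def)

lemma branch_prob_nonneg: "n \<in> nodes \<Longrightarrow> 0 \<le> branch_prob n c"
proof (cases "lbl n")
  case (Sum cs)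
  assume n: "n \<in> nodes"
  have terms: "0 \<le> snd (cs ! j) * Z c" if j: "j < length cs" "fst (cs ! j) = c" for j
  proof -
    have "(c, snd (cs ! j)) \<in> set cs" using j by (metis nth_mem prod.collapse)
    then have "0 \<le> snd (cs ! j)" "c \<in> nodes"
      using sum_weight_nonneg[OF n Sum] child_in_nodes[OF n] Sum by force+
    then show ?thesis using Z_nonneg by simp
  qed
  have "0 \<le> (\<Sum>j | j < length cs \<and> fst (cs ! j) = c. snd (cs ! j) * Z c)"
    by (rule sum_nonneg) (simp add: terms)
  then show ?thesis using Sum Z_nonneg[OF n] by (simp add: branch_prob_def)
qed (simp_all add: branch_prob_def)

lemma Z_mult_sum_branch_prob:
  assumes "n \<in> nodes" "lbl n = spn_node.Sum cs" "Z n \<noteq> 0"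
  shows "Z n * (\<Sum>c\<in>fst ` set cs. branch_prob n c * h c) =
         (\<Sum>j<length cs. snd (cs ! j) * (Z (fst (cs ! j)) * h (fst (cs ! j))))"
proof -
  have weights: "Z n * branch_prob n c =
      (\<Sum>j | j \<in> {..<length cs} \<and> fst (cs ! j) = c. snd (cs ! j) * Z c)" for c
    using assms by (simp add: branch_prob_def)
  have "Z n * (\<Sum>c\<in>fst ` set cs. branch_prob n c * h c) =
      (\<Sum>c\<in>fst ` set cs. (Z n * branch_prob n c) * h c)"
    by (simp add: sum_distrib_left mult.assoc)
  also have "\<dots> = (\<Sum>c\<in>fst ` set cs. \<Sum>j | j \<in> {..<length cs} \<and> fst (cs ! j) = c.
      snd (cs ! j) * (Z (fst (cs ! j)) * h (fst (cs ! j))))"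
    unfolding weights by (simp add: sum_distrib_right mult.assoc)
  also have "\<dots> = (\<Sum>j<length cs. snd (cs ! j) * (Z (fst (cs ! j)) * h (fst (cs ! j))))"
    by (subst sum.group) auto
  finally show ?thesis .
qed

lemma sum_branch_prob:
  assumes n: "n \<in> nodes" "lbl n = spn_node.Sum cs"
  shows "(\<Sum>c\<in>fst ` set cs. branch_prob n c) = 1"
proof (cases "Z n = 0")
  case True
  have "fst (hd cs) \<in> fst ` set cs" using sum_node_nonempty[OF n] by simp
  then show ?thesis using True n(2) by (simp add: branch_prob_def)
next
  case False
  have "Z n * (\<Sum>c\<in>fst ` set cs. branch_prob n c * 1) =
      (\<Sum>j<length cs. snd (cs ! j) * (Z (fst (cs ! j)) * 1))"
    by (rule Z_mult_sum_branch_prob[OF n False])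
  also have "\<dots> = Z n" by (simp add: Z_Sum[OF n])
  finally show ?thesis using False by simp
qed

lemma sum_alternatives_prob: "n \<in> or_nodes \<Longrightarrow> (\<Sum>(x, p)\<in>alternatives n. p) = 1"
proof -
  assume "n \<in> or_nodes"
  then have n: "n \<in> nodes" "n \<notin> and_nodes" by (auto simp: or_nodes_def)
  then show ?thesis
  proof (cases rule: node_cases)
    case (Sum cs)
    have "inj_on (\<lambda>c. (Nt c, branch_prob n c)) (fst ` set cs)" by (auto intro: inj_onI)
    then show ?thesis
      using sum_branch_prob[OF n(1) Sum] by (simp add: alternatives_Sum[OF Sum] sum.reindex)
  next
    case (Prod cs)
    then show ?thesis using n by (simp add: and_nodes_def)
  qed (simp_all add: alternatives_Leaf alternatives_Unary)
qed

lemma or_rule_spn_aog: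
  assumes "n \<in> nodes" "(x, p) \<in> alternatives n"
  shows "n \<in> or_nodes \<and> x \<in> aog_symbols spn_aog \<and> 0 \<le> p"
  using assms(1)
proof (cases rule: node_cases)
  case (Leaf i b)
  then have "(i, b) \<in> leaf_literals" using assms(1) by (auto simp: leaf_literals_def)
  with Leaf show ?thesis
    using assms by (auto simp: alternatives_Leaf or_nodes_def and_nodes_def aog_symbols_spn_aog)
next
  case (Sum cs)
  with assms(2) obtain c where "c \<in> fst ` set cs" "x = Nt c" "p = branch_prob n c"
    by (auto simp: alternatives_Sum)
  moreover have "c \<in> nodes" using child_in_nodes[OF assms(1)] Sum calculation(1) by simp
  ultimately show ?thesis using assms(1) Sum branch_prob_nonneg[OF assms(1)]
    by (simp add: or_nodes_def and_nodes_def aog_symbols_spn_aog)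
next
  case (Unary c)
  with assms show ?thesis
    using child_in_nodes[OF assms(1), of c]
    by (auto simp: alternatives_Unary or_nodes_def and_nodes_def aog_symbols_spn_aog)
next
  case (Prod cs)
  with assms show ?thesis by (simp add: alternatives_Prod)
qed

lemma aog_wf_spn_aog: "aog_wf spn_aog"
proof -
  have "finite leaf_literals"
    using finite_subset[OF leaf_literals_subset] finite_nodes by blast
  moreover have "2 \<le> length (map Nt (node_children (lbl n))) \<and> distinct (map Nt (node_children (lbl n))) \<and>
      set (map Nt (node_children (lbl n))) \<subseteq> aog_symbols spn_aog" if "n \<in> and_nodes" for n
  proof -
    from that obtain cs where "n \<in> nodes" "lbl n = spn_node.Prod cs" "2 \<le> length cs"
      by (auto simp: and_nodes_def)
    then show ?thesis
      using distinct_Prod_children child_in_nodes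
      by (auto simp: aog_symbols_spn_aog distinct_map inj_on_def)
  qed
  moreover have "(\<Sum>r \<in> {r \<in> Sigma nodes alternatives. fst r = n}. snd (snd r)) = 1" if "n \<in> or_nodes" for n
  proof -
    have "{r \<in> Sigma nodes alternatives. fst r = n} = Pair n ` alternatives n"
      using that by (auto simp: or_nodes_def)
    then show ?thesis
      using sum_alternatives_prob[OF that] by (simp add: sum.reindex inj_on_def case_prod_beta)
  qed
  ultimately show ?thesis
    using finite_nodes root_in_nodes finite_alternatives or_rule_spn_aog
    unfolding aog_wf_def by (auto simp: and_nodes_def or_nodes_def intro: finite_subset)
qed

lemma aog_size_spn_aog: "aog_size spn_aog \<le> 3 * spn_size S"
proof -
  let ?E = "\<Sum>n\<in>nodes. length (node_children (lbl n))"
  have "card leaf_literals \<le> card nodes"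
    using card_mono[OF finite_imageI[OF finite_nodes] leaf_literals_subset] card_image_le[OF finite_nodes]
    by (rule le_trans)
  moreover have "card and_nodes + card or_nodes = card nodes"
  proof -
    have "and_nodes \<subseteq> nodes" by (auto simp: and_nodes_def)
    then show ?thesis
      using finite_nodes card_mono card_Diff_subset[of and_nodes nodes] finite_subset
      unfolding or_nodes_def by fastforce
  qed
  moreover have "(\<Sum>n\<in>and_nodes. length (map Nt (node_children (lbl n)))) \<le> ?E"
    by (simp add: and_nodes_def sum_mono2[OF finite_nodes])
  moreover have "card (Sigma nodes alternatives) \<le> card nodes + ?E"
  proof -
    have "card (Sigma nodes alternatives) = (\<Sum>n\<in>nodes. card (alternatives n))"
      using finite_nodes finite_alternatives by simp
    also have "\<dots> \<le> (\<Sum>n\<in>nodes. 1 + length (node_children (lbl n)))"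
      by (rule sum_mono) (rule card_alternatives_le)
    finally show ?thesis by (simp add: sum_Suc)
  qed
  ultimately show ?thesis by (simp add: aog_size_def spn_size_def)
qed

section \<open>Parses of the grammar\<close>

definition node_parses :: "bool list \<Rightarrow> nat \<Rightarrow> nat ptree set" where
  "node_parses xs n = aog_sym_parses spn_aog (Nt n) (literal_sample xs (scope n))"

lemma alternative_Nt:
  assumes "n \<in> nodes" "(Nt c, p) \<in> alternatives n"
  shows "c \<in> set (node_children (lbl n)) \<and> scope c = scope n"
  using assms(1)
proof (cases rule: node_cases)
  case (Sum cs)
  with assms have "c \<in> fst ` set cs" by (auto simp: alternatives_Sum)
  with Sum show ?thesis using scope_Sum_child[OF assms(1) Sum] by simp
next
  case (Unary c')
  with assms show ?thesis by (simp add: alternatives_Unary scope_Prod)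
qed (use assms in \<open>simp_all add: alternatives_Leaf alternatives_Prod\<close>)

lemma alternative_Tm:
  assumes "n \<in> nodes" "(Tm l, p) \<in> alternatives n"
  shows "lbl n = Leaf (fst l) (snd l)"
  using assms(1)
proof (cases rule: node_cases)
  case (Leaf i b)
  with assms show ?thesis by (simp add: alternatives_Leaf)
qed (use assms in \<open>auto simp: alternatives_Sum alternatives_Unary alternatives_Prod\<close>)

lemma parse_vars_subset_scope:
  "pvalid spn_aog t \<Longrightarrow> psym t = Nt n \<Longrightarrow> fst ` fst ` set (pleaves t) \<subseteq> scope n"
proof (induction t arbitrary: n)
  case (PT l th)
  then show ?case by simp
next
  case (PAnd A th ts)
  then have A: "A = n" "n \<in> and_nodes" "map psym ts = map Nt (node_children (lbl n))"
    "list_all (pvalid spn_aog) ts" by auto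
  then obtain cs where cs: "n \<in> nodes" "lbl n = spn_node.Prod cs" by (auto simp: and_nodes_def)
  have "fst ` fst ` set (pleaves t) \<subseteq> scope n" if t: "t \<in> set ts" for t
  proof -
    have "psym t \<in> set (map Nt cs)" using t A(3) cs(2) by (metis image_eqI list.set_map node_children.simps(3))
    then obtain c where c: "c \<in> set cs" "psym t = Nt c" by auto
    then have "fst ` fst ` set (pleaves t) \<subseteq> scope c"
      using PAnd.IH t A(4) by (simp add: list_all_iff)
    also have "\<dots> \<subseteq> scope n" using scope_Prod[OF cs] c(1) by auto
    finally show ?thesis .
  qed
  then show ?case by auto
next
  case (POr B th x p t)
  then have B: "B = n" "n \<in> nodes" "(x, p) \<in> alternatives n" "psym t = x" "pvalid spn_aog t"
    by auto
  show ?case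
  proof (cases x)
    case (Tm l)
    with B(4) obtain th' where "t = PT l th'" by (cases t) auto
    then show ?thesis using B Tm alternative_Tm scope_Leaf by force
  next
    case (Nt c)
    then show ?thesis using POr.IH[OF B(5)] B alternative_Nt by simp
  qed
qed

lemma sym_parses_alternative_Nt:
  "n \<in> nodes \<Longrightarrow> (Nt c, p) \<in> alternatives n \<Longrightarrow>
    aog_sym_parses spn_aog (Nt c) (literal_sample xs (scope n)) = node_parses xs c"
  using alternative_Nt by (simp add: node_parses_def)

lemma node_parses_Or:
  assumes "n \<in> or_nodes"
    and "\<And>c p. (Nt c, p) \<in> alternatives n \<Longrightarrow> finite (node_parses xs c)"
  shows finite_node_parses_Or: "finite (node_parses xs n)"
    and "(\<Sum>t\<in>node_parses xs n. pprob t) = (\<Sum>(x, p)\<in>alternatives n.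
          p * (\<Sum>t\<in>aog_sym_parses spn_aog x (literal_sample xs (scope n)). pprob t))"
proof -
  have n: "n \<in> nodes" "n \<in> aog_ors spn_aog" "n \<notin> aog_ands spn_aog"
    using assms(1) by (auto simp: or_nodes_def)
  have fin: "finite (aog_sym_parses spn_aog x (literal_sample xs (scope n)))"
    if "(x, p) \<in> aog_alternatives spn_aog n" for x p
  proof (cases x)
    case (Nt c)
    then show ?thesis
      using that assms(2) sym_parses_alternative_Nt n(1) by (simp add: aog_alternatives_spn_aog)
  qed (simp add: finite_sym_parses_Tm)
  have "finite (aog_alternatives spn_aog n)"
    using finite_alternatives aog_alternatives_spn_aog[OF n(1)] by simp
  note Or = finite_sym_parses_Or[OF n(2,3) this fin] sum_pprob_sym_parses_Or[OF n(2,3) this fin]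
  show "finite (node_parses xs n)" using Or(1) by (simp add: node_parses_def)
  show "(\<Sum>t\<in>node_parses xs n. pprob t) = (\<Sum>(x, p)\<in>alternatives n.
          p * (\<Sum>t\<in>aog_sym_parses spn_aog x (literal_sample xs (scope n)). pprob t))"
    using Or(2) by (simp add: node_parses_def aog_alternatives_spn_aog[OF n(1)])
qed

lemma pvalid_PAnd_spn_aog:
  "pvalid spn_aog (PAnd A th ts) \<longleftrightarrow>
     A \<in> and_nodes \<and> th = 0 \<and> list_all2 (\<lambda>c t. pvalid spn_aog t \<and> psym t = Nt c) (node_children (lbl A)) ts"
  by (auto simp: list_all2_conj_map_eq)

lemma node_parses_Prod:
  assumes n: "n \<in> nodes" "lbl n = spn_node.Prod cs" "2 \<le> length cs"
  shows "node_parses xs n = PAnd n 0 ` {ts. list_all2 (\<lambda>c t. t \<in> node_parses xs c) cs ts}"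
proof -
  let ?valid = "list_all2 (\<lambda>c t. pvalid spn_aog t \<and> psym t = Nt c) cs"
  let ?sampled = "list_all2 (\<lambda>c t. distinct (pleaves t) \<and> set (pleaves t) = literal_sample xs (scope c)) cs"
  have and_node: "n \<in> and_nodes" "n \<notin> or_nodes" using n by (auto simp: and_nodes_def or_nodes_def)
  have samples: "distinct (concat (map pleaves ts)) \<and> set (concat (map pleaves ts)) = literal_sample xs (scope n)
      \<longleftrightarrow> ?sampled ts" if "?valid ts" for ts
  proof -
    have "list_all2 (\<lambda>c t. fst ` fst ` set (pleaves t) \<subseteq> scope c) cs ts"
      using that by (rule list_all2_mono) (use parse_vars_subset_scope in blast)
    then have "list_all2 (\<lambda>A l. fst ` fst ` set l \<subseteq> A) (map scope cs) (map pleaves ts)"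
      by (simp add: list_all2_map1 list_all2_map2)
    moreover have "sorted_wrt (\<lambda>A B. A \<inter> B = {}) (map scope cs)"
      using scopes_disjoint_Prod[OF n(1,2)] by (simp add: sorted_wrt_map)
    ultimately show ?thesis
      using concat_eq_literal_sample_iff[of "map scope cs" "map pleaves ts" xs]
      by (simp add: scope_Prod[OF n(1,2)] list_all2_map1 list_all2_map2)
  qed
  have "t \<in> node_parses xs n \<longleftrightarrow> t \<in> PAnd n 0 ` {ts. list_all2 (\<lambda>c t. t \<in> node_parses xs c) cs ts}" for t
  proof (cases t)
    case (PAnd A th ts)
    have "t \<in> node_parses xs n \<longleftrightarrow> A = n \<and> th = 0 \<and> ?valid ts \<and>
        distinct (concat (map pleaves ts)) \<and> set (concat (map pleaves ts)) = literal_sample xs (scope n)"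
      using PAnd n(2) and_node
      by (auto simp: node_parses_def aog_sym_parses_def pvalid_PAnd_spn_aog simp del: pvalid.simps(2))
    also have "\<dots> \<longleftrightarrow> A = n \<and> th = 0 \<and> ?valid ts \<and> ?sampled ts"
      using samples by blast
    also have "\<dots> \<longleftrightarrow> t \<in> PAnd n 0 ` {ts. list_all2 (\<lambda>c t. t \<in> node_parses xs c) cs ts}"
      using PAnd by (auto simp: node_parses_def aog_sym_parses_def list_all2_conj[symmetric] conj_assoc)
    finally show ?thesis .
  qed (use and_node in \<open>auto simp: node_parses_def aog_sym_parses_def\<close>)
  then show ?thesis by blast
qed

lemma finite_node_parses: "n \<in> nodes \<Longrightarrow> finite (node_parses xs n)"
proof (induction n rule: node_induct)
  case (step n)
  show ?case
  proof (cases "n \<in> or_nodes")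
    case True
    then show ?thesis using step alternative_Nt by (blast intro: finite_node_parses_Or)
  next
    case False
    then obtain cs where cs: "lbl n = spn_node.Prod cs" "2 \<le> length cs"
      using step(1) by (auto simp: or_nodes_def and_nodes_def)
    then show ?thesis
      using step by (simp add: node_parses_Prod[OF step(1) cs] finite_list_all2_mem)
  qed
qed

lemma sum_pprob_node_parses_Or:
  assumes "n \<in> or_nodes"
  shows "(\<Sum>t\<in>node_parses xs n. pprob t) = (\<Sum>(x, p)\<in>alternatives n.
          p * (\<Sum>t\<in>aog_sym_parses spn_aog x (literal_sample xs (scope n)). pprob t))"
proof -
  have "n \<in> nodes" using assms by (simp add: or_nodes_def)
  then show ?thesis
    using node_parses_Or(2)[OF assms] finite_node_parses child_in_nodes alternative_Nt by blast
qed

lemma sum_pprob_node_parses_Leaf: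
  assumes "n \<in> nodes" "lbl n = Leaf i b"
  shows "(\<Sum>t\<in>node_parses xs n. pprob t) = (if xs ! i = b then 1 else 0)"
proof -
  have "n \<in> or_nodes" using assms by (simp add: or_nodes_def and_nodes_def)
  moreover have "(i, b) \<in> leaf_literals" using assms by (auto simp: leaf_literals_def)
  moreover have "{th. literal_sample xs (scope n) = {((i, b), th)}} = (if xs ! i = b then {i} else {})"
    using scope_Leaf[OF assms(2)] by (auto simp: literal_sample_def)
  ultimately show ?thesis
    by (simp add: sum_pprob_node_parses_Or alternatives_Leaf[OF assms(2)] aog_sym_parses_Tm)
qed

lemma sum_pprob_node_parses_Sum:
  assumes "n \<in> nodes" "lbl n = spn_node.Sum cs"
  shows "(\<Sum>t\<in>node_parses xs n. pprob t) =
         (\<Sum>c\<in>fst ` set cs. branch_prob n c * (\<Sum>t\<in>node_parses xs c. pprob t))"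
proof -
  have "n \<in> or_nodes" using assms by (simp add: or_nodes_def and_nodes_def)
  moreover have "inj_on (\<lambda>c. (Nt c, branch_prob n c)) (fst ` set cs)" by (auto intro: inj_onI)
  ultimately have "(\<Sum>t\<in>node_parses xs n. pprob t) = (\<Sum>c\<in>fst ` set cs.
      branch_prob n c * (\<Sum>t\<in>aog_sym_parses spn_aog (Nt c) (literal_sample xs (scope n)). pprob t))"
    by (simp add: sum_pprob_node_parses_Or alternatives_Sum[OF assms(2)] sum.reindex)
  also have "\<dots> = (\<Sum>c\<in>fst ` set cs. branch_prob n c * (\<Sum>t\<in>node_parses xs c. pprob t))"
    using scope_Sum_child[OF assms] by (simp add: node_parses_def)
  finally show ?thesis .
qed

lemma sum_pprob_node_parses_Unary:
  assumes "n \<in> nodes" "lbl n = spn_node.Prod [c]"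
  shows "(\<Sum>t\<in>node_parses xs n. pprob t) = (\<Sum>t\<in>node_parses xs c. pprob t)"
proof -
  have "n \<in> or_nodes" using assms by (simp add: or_nodes_def and_nodes_def)
  then show ?thesis
    using sym_parses_alternative_Nt[OF assms(1)]
    by (simp add: sum_pprob_node_parses_Or alternatives_Unary[OF assms(2)])
qed

lemma sum_pprob_node_parses_Prod:
  assumes "n \<in> nodes" "lbl n = spn_node.Prod cs" "2 \<le> length cs"
  shows "(\<Sum>t\<in>node_parses xs n. pprob t) = (\<Prod>c\<leftarrow>cs. \<Sum>t\<in>node_parses xs c. pprob t)"
proof -
  let ?T = "{ts. list_all2 (\<lambda>c t. t \<in> node_parses xs c) cs ts}"
  have "inj_on (PAnd n 0) ?T" by (auto intro: inj_onI)
  then have "(\<Sum>t\<in>node_parses xs n. pprob t) = (\<Sum>ts\<in>?T. \<Prod>t\<leftarrow>ts. pprob t)"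
    by (simp add: node_parses_Prod[OF assms] sum.reindex)
  also have "\<dots> = (\<Prod>c\<leftarrow>cs. \<Sum>t\<in>node_parses xs c. pprob t)"
    using finite_node_parses child_in_nodes[OF assms(1)] assms(2)
    by (intro sum_prod_list_list_all2_mem) simp
  finally show ?thesis .
qed

lemma Z_mult_sum_pprob_node_parses:
  assumes xs: "length xs = d"
  shows "n \<in> nodes \<Longrightarrow> Z n * (\<Sum>t\<in>node_parses xs n. pprob t) = spn_value S xs n"
proof (induction n rule: node_induct)
  case (step n)
  from step(1) show ?case
  proof (cases rule: node_cases)
    case (Leaf i b)
    then show ?thesis
      by (simp add: sum_pprob_node_parses_Leaf[OF step(1)] Z_Leaf[OF step(1)] spn_value_Leaf)
  next
    case (Sum cs)
    show ?thesis
    proof (cases "Z n = 0")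
      case True
      then show ?thesis using spn_value_eq_0_if_Z_eq_0[OF step(1) True xs] by simp
    next
      case False
      then show ?thesis
        using step(2) Sum by (simp add: sum_pprob_node_parses_Sum[OF step(1) Sum]
            Z_mult_sum_branch_prob[OF step(1) Sum False] spn_value_Sum[OF step(1) Sum])
    qed
  next
    case (Unary c)
    then show ?thesis
      using step(2) by (simp add: sum_pprob_node_parses_Unary[OF step(1)] Z_Prod[OF step(1)]
          spn_value_Prod[OF step(1)])
  next
    case (Prod cs)
    then have "Z n * (\<Sum>t\<in>node_parses xs n. pprob t) =
        (\<Prod>c\<leftarrow>cs. Z c * (\<Sum>t\<in>node_parses xs c. pprob t))"
      by (simp add: sum_pprob_node_parses_Prod[OF step(1)] Z_Prod[OF step(1)] prod_list_map_mult)
    also have "\<dots> = spn_value S xs n"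
      using step(2) Prod by (simp add: spn_value_Prod[OF step(1) Prod(1)] cong: map_cong)
    finally show ?thesis .
  qed
qed

lemma aog_marginal_spn_aog:
  assumes "length xs = d" "Z (spn_root S) \<noteq> 0"
  shows "aog_marginal spn_aog (assignment_sample d xs) = spn_prob S d xs"
proof -
  have "aog_parses spn_aog (assignment_sample d xs) = node_parses xs (spn_root S)"
    by (simp add: aog_parses_eq_sym_parses assignment_sample_eq node_parses_def scope_root)
  then have "aog_marginal spn_aog (assignment_sample d xs) = (\<Sum>t\<in>node_parses xs (spn_root S). pprob t)"
    by (simp add: aog_marginal_def finite_node_parses[OF root_in_nodes])
  also have "\<dots> = spn_value S xs (spn_root S) / Z (spn_root S)"
    using Z_mult_sum_pprob_node_parses[OF assms(1) root_in_nodes] assms(2) by (simp add: field_simps)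
  also have "\<dots> = spn_prob S d xs" by (simp add: spn_prob_def Z_root)
  finally show ?thesis .
qed

lemma linear_size_aog_exists:
  "\<exists>G :: nat aog. aog_wf G \<and> real (aog_size G) \<le> 5 * real (spn_size S) \<and>
     (\<forall>xs. length xs = d \<longrightarrow> aog_marginal G (assignment_sample d xs) = spn_prob S d xs)"
proof (cases "Z (spn_root S) = 0")
  case True
  \<comment> \<open>Then the SPN is identically zero and its probability is 0 / 0 = 0.\<close>
  then have "spn_prob S d xs = 0" for xs by (simp add: spn_prob_def Z_root)
  then show ?thesis
    using aog_wf_unparsable_aog aog_size_unparsable_aog aog_marginal_unparsable_aog spn_size_pos[OF wf_spn]
    by (intro exI[of _ unparsable_aog]) simp
next
  case False
  then show ?thesis
    using aog_wf_spn_aog aog_size_spn_aog aog_marginal_spn_aog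
    by (intro exI[of _ spn_aog]) (auto intro: order_trans[OF of_nat_mono])
qed

end

theorem mainTheorem9:
  "\<exists>c::real. \<forall>(S::spn) (d::nat).
     spn_wf S d \<and> spn_valid S \<and> spn_decomposable S \<longrightarrow>
     (\<exists>G :: nat aog. aog_wf G \<and>
        real (aog_size G) \<le> c * real (spn_size S) \<and>
        (\<forall>xs. length xs = d \<longrightarrow>
           aog_marginal G (assignment_sample d xs) = spn_prob S d xs))"
proof (intro exI[of _ 5] allI impI)
  fix S d
  assume "spn_wf S d \<and> spn_valid S \<and> spn_decomposable S"
  then interpret decomposable_spn S d by unfold_locales auto
  show "\<exists>G :: nat aog. aog_wf G \<and> real (aog_size G) \<le> 5 * real (spn_size S) \<and>
     (\<forall>xs. length xs = d \<longrightarrow> aog_marginal G (assignment_sample d xs) = spn_prob S d xs)"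
    by (rule linear_size_aog_exists)
qed

end
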